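(* Let $\Sigma$ be a set. Any subset of $T^1(\Sigma)$ closed under pruned multiplication, $+$ and $*$ forms an adequate semigroup under these operations (with $+$ and $*$ being the adequate-semigroup operations). Any subset of $T^1(\Sigma)$ closed under pruned multiplication and $+$ [respectively, pruned multiplication and $*$] forms a left adequate [respectively, right adequate] semigroup under these operations.
   Context: Semigroup notions: for a semigroup $S$ let $S^1=S$ if $S$ is a monoid and otherwise $S$ with an identity adjoined. $a\,\mathcal{L}^*\,b$ iff for all $x,y\in S^1$: $ax=ay\Leftrightarrow bx=by$; $a\,\mathcal{R}^*\,b$ iff for all $x,y\in S^1$: $xa=ya\Leftrightarrow xb=yb$. $S$ is left adequate if its idempotents commute and every $\mathcal{R}^*$-class contains an idempotent (necessarily unique, denoted $x^+$ for the class of $x$); right adequate if idempotents commute and every $\mathcal{L}^*$-class contains an idempotent ($x^*$); adequate if both. Trees: a $\Sigma$-tree is a finite directed graph whose underlying undirected graph is a tree, edges labelled by elements of $\Sigma$, with distinguished start and end vertices such that there is a (possibly empty) directed path from start to end vertex. A morphism $X\to Y$ maps vertices to vertices and edges to edges, preserving initial vertex, terminal vertex and label of edges and mapping start/end vertex to start/end vertex; isomorphisms are morphisms bijective on vertices and edges. A retraction is an idempotent morphism $X\to X$, its image being a retract; $X$ is pruned if it has no non-identity retraction. Every tree $X$ has a pruned retract, unique up to isomorphism, with isomorphism type $\overline{X}$. $T^1(\Sigma)$ is the set of isomorphism types of pruned $\Sigma$-trees. Unpruned operations: $X\times Y$ identifies the end vertex of (a copy of) $X$ with the start vertex of (a disjoint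 copy of) $Y$, start vertex that of $X$, end vertex that of $Y$; $X^{(+)}$ is $X$ with end vertex moved to the start vertex; $X^{( * )}$ is $X$ with start vertex moved to the end vertex. Pruned operations: $XY=\overline{X\times Y}$, $X^+=\overline{X^{(+)}}$, $X^*=\overline{X^{( * )}}$. *)

theory Defs
  imports Main
begin

text \<open>A Sigma-tree: finite vertex set (of natural numbers), labelled directed edges
  given as triples (initial vertex, label, terminal vertex), start and end vertex.\<close>

record 'a stree =
  verts :: "nat set"
  edges :: "(nat \<times> 'a \<times> nat) set"
  sv :: nat
  ev :: nat

definition dgraph :: "'a stree \<Rightarrow> (nat \<times> nat) set" where
  "dgraph X = {(u, v). \<exists>a. (u, a, v) \<in> edges X}"

definition ugraph :: "'a stree \<Rightarrow> (nat \<times> nat) set" where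
  "ugraph X = dgraph X \<union> (dgraph X)\<inverse>"

definition is_tree :: "'a set \<Rightarrow> 'a stree \<Rightarrow> bool" where
  "is_tree \<Sigma> X \<longleftrightarrow>
     finite (verts X) \<and> finite (edges X) \<and>
     sv X \<in> verts X \<and> ev X \<in> verts X \<and>
     (\<forall>(u, a, v) \<in> edges X. u \<in> verts X \<and> a \<in> \<Sigma> \<and> v \<in> verts X) \<and>
     card (edges X) + 1 = card (verts X) \<and>
     (\<forall>u \<in> verts X. \<forall>v \<in> verts X. (u, v) \<in> (ugraph X)\<^sup>*) \<and>
     (sv X, ev X) \<in> (dgraph X)\<^sup>*"

definition edge_map :: "(nat \<Rightarrow> nat) \<Rightarrow> nat \<times> 'a \<times> nat \<Rightarrow> nat \<times> 'a \<times> nat" where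
  "edge_map f = (\<lambda>(u, a, v). (f u, a, f v))"

definition morph :: "'a stree \<Rightarrow> 'a stree \<Rightarrow> (nat \<Rightarrow> nat) \<Rightarrow> bool" where
  "morph X Y f \<longleftrightarrow>
     (\<forall>v \<in> verts X. f v \<in> verts Y) \<and>
     (\<forall>e \<in> edges X. edge_map f e \<in> edges Y) \<and>
     f (sv X) = sv Y \<and> f (ev X) = ev Y"

definition tree_iso :: "'a stree \<Rightarrow> 'a stree \<Rightarrow> bool" where
  "tree_iso X Y \<longleftrightarrow> (\<exists>f. morph X Y f \<and> bij_betw f (verts X) (verts Y) \<and>
                          bij_betw (edge_map f) (edges X) (edges Y))"

definition retraction :: "'a stree \<Rightarrow> (nat \<Rightarrow> nat) \<Rightarrow> bool" where
  "retraction X r \<longleftrightarrow> morph X X r \<and> (\<forall>v \<in> verts X. r (r v) = r v)"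

definition retract_img :: "'a stree \<Rightarrow> (nat \<Rightarrow> nat) \<Rightarrow> 'a stree" where
  "retract_img X r = \<lparr>verts = r ` verts X, edges = edge_map r ` edges X,
                      sv = r (sv X), ev = r (ev X)\<rparr>"

definition pruned :: "'a stree \<Rightarrow> bool" where
  "pruned X \<longleftrightarrow> (\<forall>r. retraction X r \<longrightarrow> (\<forall>v \<in> verts X. r v = v))"

definition pruned_retract :: "'a stree \<Rightarrow> 'a stree \<Rightarrow> bool" where
  "pruned_retract X R \<longleftrightarrow> (\<exists>r. retraction X r \<and> R = retract_img X r \<and> pruned R)"

definition glue_map :: "'a stree \<Rightarrow> 'a stree \<Rightarrow> nat \<Rightarrow> nat" where
  "glue_map X Y v = (if v = sv Y then 2 * ev X else 2 * v + 1)"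

text \<open>X \<times> Y: disjoint copies (X on even numbers, Y on odd numbers), end vertex of X
  identified with start vertex of Y.\<close>
definition tprod :: "'a stree \<Rightarrow> 'a stree \<Rightarrow> 'a stree" where
  "tprod X Y = \<lparr>verts = (\<lambda>v. 2 * v) ` verts X \<union> glue_map X Y ` verts Y,
                edges = edge_map (\<lambda>v. 2 * v) ` edges X \<union> edge_map (glue_map X Y) ` edges Y,
                sv = 2 * sv X, ev = glue_map X Y (ev Y)\<rparr>"

definition tplus :: "'a stree \<Rightarrow> 'a stree" where
  "tplus X = X\<lparr>ev := sv X\<rparr>"

definition tstar :: "'a stree \<Rightarrow> 'a stree" where
  "tstar X = X\<lparr>sv := ev X\<rparr>"

definition iso_class :: "'a set \<Rightarrow> 'a stree \<Rightarrow> 'a stree set" where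
  "iso_class \<Sigma> X = {Y. is_tree \<Sigma> Y \<and> tree_iso X Y}"

definition T1 :: "'a set \<Rightarrow> 'a stree set set" where
  "T1 \<Sigma> = {iso_class \<Sigma> X | X. is_tree \<Sigma> X \<and> pruned X}"

text \<open>Pruned operations on isomorphism types: the isomorphism type of a pruned retract
  of the unpruned operation applied to representatives.\<close>
definition pmult :: "'a set \<Rightarrow> 'a stree set \<Rightarrow> 'a stree set \<Rightarrow> 'a stree set" where
  "pmult \<Sigma> C D = {Z. \<exists>X \<in> C. \<exists>Y \<in> D. \<exists>R. pruned_retract (tprod X Y) R \<and>
                                     is_tree \<Sigma> Z \<and> tree_iso R Z}"

definition pplus :: "'a set \<Rightarrow> 'a stree set \<Rightarrow> 'a stree set" where
  "pplus \<Sigma> C = {Z. \<exists>X \<in> C. \<exists>R. pruned_retract (tplus X) R \<and> is_tree \<Sigma> Z \<and> tree_iso R Z}"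

definition pstar :: "'a set \<Rightarrow> 'a stree set \<Rightarrow> 'a stree set" where
  "pstar \<Sigma> C = {Z. \<exists>X \<in> C. \<exists>R. pruned_retract (tstar X) R \<and> is_tree \<Sigma> Z \<and> tree_iso R Z}"

text \<open>S^1: None is the adjoined identity (adjoining it even when S is a monoid
  gives the same relations L*, R*).\<close>
definition S1 :: "'b set \<Rightarrow> 'b option set" where
  "S1 S = insert None (Some ` S)"

definition lmul1 :: "('b \<Rightarrow> 'b \<Rightarrow> 'b) \<Rightarrow> 'b option \<Rightarrow> 'b \<Rightarrow> 'b" where
  "lmul1 m x a = (case x of None \<Rightarrow> a | Some y \<Rightarrow> m y a)"

definition rmul1 :: "('b \<Rightarrow> 'b \<Rightarrow> 'b) \<Rightarrow> 'b \<Rightarrow> 'b option \<Rightarrow> 'b" where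
  "rmul1 m a x = (case x of None \<Rightarrow> a | Some y \<Rightarrow> m a y)"

definition Lstar :: "'b set \<Rightarrow> ('b \<Rightarrow> 'b \<Rightarrow> 'b) \<Rightarrow> 'b \<Rightarrow> 'b \<Rightarrow> bool" where
  "Lstar S m a b \<longleftrightarrow> (\<forall>x \<in> S1 S. \<forall>y \<in> S1 S.
      rmul1 m a x = rmul1 m a y \<longleftrightarrow> rmul1 m b x = rmul1 m b y)"

definition Rstar :: "'b set \<Rightarrow> ('b \<Rightarrow> 'b \<Rightarrow> 'b) \<Rightarrow> 'b \<Rightarrow> 'b \<Rightarrow> bool" where
  "Rstar S m a b \<longleftrightarrow> (\<forall>x \<in> S1 S. \<forall>y \<in> S1 S.
      lmul1 m x a = lmul1 m y a \<longleftrightarrow> lmul1 m x b = lmul1 m y b)"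

definition semigroup_on :: "'b set \<Rightarrow> ('b \<Rightarrow> 'b \<Rightarrow> 'b) \<Rightarrow> bool" where
  "semigroup_on S m \<longleftrightarrow> (\<forall>a \<in> S. \<forall>b \<in> S. m a b \<in> S) \<and>
     (\<forall>a \<in> S. \<forall>b \<in> S. \<forall>c \<in> S. m (m a b) c = m a (m b c))"

definition idem_commute :: "'b set \<Rightarrow> ('b \<Rightarrow> 'b \<Rightarrow> 'b) \<Rightarrow> bool" where
  "idem_commute S m \<longleftrightarrow> (\<forall>e \<in> S. \<forall>f \<in> S. m e e = e \<and> m f f = f \<longrightarrow> m e f = m f e)"

definition left_adequate :: "'b set \<Rightarrow> ('b \<Rightarrow> 'b \<Rightarrow> 'b) \<Rightarrow> bool" where
  "left_adequate S m \<longleftrightarrow> semigroup_on S m \<and> idem_commute S m \<and>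
     (\<forall>a \<in> S. \<exists>e \<in> S. m e e = e \<and> Rstar S m e a)"

definition right_adequate :: "'b set \<Rightarrow> ('b \<Rightarrow> 'b \<Rightarrow> 'b) \<Rightarrow> bool" where
  "right_adequate S m \<longleftrightarrow> semigroup_on S m \<and> idem_commute S m \<and>
     (\<forall>a \<in> S. \<exists>e \<in> S. m e e = e \<and> Lstar S m e a)"

definition adequate :: "'b set \<Rightarrow> ('b \<Rightarrow> 'b \<Rightarrow> 'b) \<Rightarrow> bool" where
  "adequate S m \<longleftrightarrow> left_adequate S m \<and> right_adequate S m"

text \<open>p is the "+" operation of S: p a is the (unique) idempotent in the R*-class of a.\<close>
definition is_plus_op :: "'b set \<Rightarrow> ('b \<Rightarrow> 'b \<Rightarrow> 'b) \<Rightarrow> ('b \<Rightarrow> 'b) \<Rightarrow> bool" where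
  "is_plus_op S m p \<longleftrightarrow> (\<forall>a \<in> S. p a \<in> S \<and> m (p a) (p a) = p a \<and> Rstar S m (p a) a)"

definition is_star_op :: "'b set \<Rightarrow> ('b \<Rightarrow> 'b \<Rightarrow> 'b) \<Rightarrow> ('b \<Rightarrow> 'b) \<Rightarrow> bool" where
  "is_star_op S m p \<longleftrightarrow> (\<forall>a \<in> S. p a \<in> S \<and> m (p a) (p a) = p a \<and> Lstar S m (p a) a)"

definition closed1 :: "'b set \<Rightarrow> ('b \<Rightarrow> 'b) \<Rightarrow> bool" where
  "closed1 S f \<longleftrightarrow> (\<forall>a \<in> S. f a \<in> S)"

definition closed2 :: "'b set \<Rightarrow> ('b \<Rightarrow> 'b \<Rightarrow> 'b) \<Rightarrow> bool" where
  "closed2 S m \<longleftrightarrow> (\<forall>a \<in> S. \<forall>b \<in> S. m a b \<in> S)"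

end

theory Submission
  imports Defs "HOL-Library.FuncSet"
begin

text \<open>Call two trees hom-equivalent if there are morphisms in both directions. Some power of an
  endomorphism of a finite tree is a retraction, so endomorphisms of pruned trees are bijective
  and hom-equivalent pruned trees are isomorphic. Hence an element of T1 is determined by any tree
  hom-equivalent to its members, and the pruned operations can be computed on unpruned
  representatives. Gluing is associative up to hom-equivalence, idempotents are exactly the
  classes whose start and end vertex coincide, and such trees commute.

  The key point is a cancellation property. Every tree admits a grading, a height function
  increasing by one along each edge, which measures the length of every directed walk. Hence a
  morphism X \<times> A \<rightarrow> Y \<times> A must send the glue point to the glue point, so it is also a morphism
  X \<times> A(+) \<rightarrow> Y \<times> A(+). Together with A(+) \<times> A \<simeq> A this shows that a+ and a are
  R*-related; dually for a* and L*.\<close>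

section \<open>Morphisms and hom-equivalence\<close>

definition hom :: "'a stree \<Rightarrow> 'a stree \<Rightarrow> (nat \<Rightarrow> nat) \<Rightarrow> bool" where
  "hom X Y f \<longleftrightarrow> (\<forall>v \<in> verts X. f v \<in> verts Y) \<and> (\<forall>e \<in> edges X. edge_map f e \<in> edges Y)"

definition wf_stree :: "'a stree \<Rightarrow> bool" where
  "wf_stree X \<longleftrightarrow> sv X \<in> verts X \<and> ev X \<in> verts X \<and>
     (\<forall>(u, a, v) \<in> edges X. u \<in> verts X \<and> v \<in> verts X)"

definition maps_to :: "'a stree \<Rightarrow> 'a stree \<Rightarrow> bool" where
  "maps_to X Y \<longleftrightarrow> (\<exists>f. morph X Y f)"

definition hom_equiv :: "'a stree \<Rightarrow> 'a stree \<Rightarrow> bool" where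
  "hom_equiv X Y \<longleftrightarrow> maps_to X Y \<and> maps_to Y X"

lemma edge_map_simp [simp]: "edge_map f (u, a, v) = (f u, a, f v)"
  by (simp add: edge_map_def)

lemma morph_iff_hom: "morph X Y f \<longleftrightarrow> hom X Y f \<and> f (sv X) = sv Y \<and> f (ev X) = ev Y"
  by (auto simp: morph_def hom_def)

lemma hom_id: "hom X X (\<lambda>v. v)"
  by (auto simp: hom_def edge_map_def split: prod.splits)

lemma hom_comp: "hom X Y f \<Longrightarrow> hom Y Z g \<Longrightarrow> hom X Z (\<lambda>v. g (f v))"
  unfolding hom_def by (fastforce simp: edge_map_def split: prod.splits)

lemma morph_id: "morph X X (\<lambda>v. v)"
  using hom_id by (simp add: morph_iff_hom)

lemma morph_comp: "morph X Y f \<Longrightarrow> morph Y Z g \<Longrightarrow> morph X Z (\<lambda>v. g (f v))"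
  using hom_comp by (auto simp: morph_iff_hom)

lemma morph_funpow: "morph X X h \<Longrightarrow> morph X X (h ^^ n)"
proof (induction n)
  case 0
  show ?case
    using morph_id by (simp add: id_def)
next
  case (Suc n)
  show ?case
    using morph_comp[OF Suc.IH[OF Suc.prems] Suc.prems] by (simp add: comp_def)
qed

lemma is_tree_imp_wf_stree: "is_tree \<Sigma> X \<Longrightarrow> wf_stree X"
  unfolding is_tree_def wf_stree_def by blast

lemma maps_to_refl: "maps_to X X"
  using morph_id unfolding maps_to_def by blast

lemma maps_to_trans: "maps_to X Y \<Longrightarrow> maps_to Y Z \<Longrightarrow> maps_to X Z"
  using morph_comp unfolding maps_to_def by blast

lemma hom_equiv_refl: "hom_equiv X X"
  by (simp add: hom_equiv_def maps_to_refl)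

lemma hom_equiv_sym: "hom_equiv X Y \<Longrightarrow> hom_equiv Y X"
  by (simp add: hom_equiv_def)

lemma hom_equiv_trans: "hom_equiv X Y \<Longrightarrow> hom_equiv Y Z \<Longrightarrow> hom_equiv X Z"
  using maps_to_trans unfolding hom_equiv_def by blast

lemma hom_equiv_maps: "morph X Y f \<Longrightarrow> morph Y X g \<Longrightarrow> hom_equiv X Y"
  unfolding hom_equiv_def maps_to_def by blast

section \<open>Isomorphic and pruned trees\<close>

lemma tree_iso_refl: "tree_iso X X"
  unfolding tree_iso_def
proof (intro exI conjI)
  have "edge_map (\<lambda>v. v) = (id :: nat \<times> 'a \<times> nat \<Rightarrow> _)"
    by (auto simp: edge_map_def)
  then show "bij_betw (edge_map (\<lambda>v. v)) (edges X) (edges X)"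
    by simp
qed (auto simp: morph_id bij_betw_def)

lemma tree_iso_inverse_morph:
  assumes "wf_stree X" "morph X Z f" "bij_betw f (verts X) (verts Z)"
    "bij_betw (edge_map f) (edges X) (edges Z)"
  shows "morph Z X (inv_into (verts X) f)"
proof -
  let ?g = "inv_into (verts X) f"
  have inj: "inj_on f (verts X)" and im: "f ` verts X = verts Z"
    using assms(3) by (auto simp: bij_betw_def)
  have eim: "edge_map f ` edges X = edges Z"
    using assms(4) by (auto simp: bij_betw_def)
  have "edge_map ?g e \<in> edges X" if "e \<in> edges Z" for e
  proof -
    obtain u a v where uv: "(u, a, v) \<in> edges X" "e = (f u, a, f v)"
      using \<open>e \<in> edges Z\<close> eim by (metis edge_map_simp imageE prod_cases3)
    then have "u \<in> verts X" "v \<in> verts X"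
      using assms(1) by (auto simp: wf_stree_def)
    then show ?thesis
      using uv inj by simp
  qed
  moreover have "?g (f (sv X)) = sv X" "?g (f (ev X)) = ev X"
    using assms(1) inj by (simp_all add: wf_stree_def)
  ultimately show ?thesis
    using im assms(2) by (auto simp: morph_def inv_into_into)
qed

lemma tree_iso_imp_hom_equiv: "wf_stree X \<Longrightarrow> tree_iso X Z \<Longrightarrow> hom_equiv X Z"
  unfolding tree_iso_def using tree_iso_inverse_morph hom_equiv_maps by blast

lemma pruned_tree_iso:
  assumes "wf_stree X" "tree_iso X Z" "pruned X"
  shows "pruned Z"
  unfolding pruned_def
proof (intro allI impI ballI)
  fix r w
  assume r: "retraction Z r" and w: "w \<in> verts Z"
  obtain f where f: "morph X Z f" "bij_betw f (verts X) (verts Z)"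
    "bij_betw (edge_map f) (edges X) (edges Z)"
    using assms(2) by (auto simp: tree_iso_def)
  let ?g = "inv_into (verts X) f"
  have fg: "f (?g z) = z" if "z \<in> verts Z" for z
    using f(2) that by (simp add: bij_betw_inv_into_right)
  have rZ: "r z \<in> verts Z" if "z \<in> verts Z" for z
    using r that by (auto simp: retraction_def morph_def)
  have fX: "f v \<in> verts Z" if "v \<in> verts X" for v
    using f(1) that by (auto simp: morph_def)
  \<comment> \<open>conjugating r back to X gives a retraction of the pruned tree X\<close>
  let ?r = "\<lambda>v. ?g (r (f v))"
  have "morph X X ?r"
    using morph_comp[OF morph_comp[OF f(1)] tree_iso_inverse_morph[OF assms(1) f]] r
    by (simp add: retraction_def)
  moreover have "?r (?r v) = ?r v" if "v \<in> verts X" for v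
    using r that fg rZ fX by (simp add: retraction_def)
  ultimately have "?r v = v" if "v \<in> verts X" for v
    using assms(3) that by (auto simp: pruned_def retraction_def)
  moreover obtain v where "v \<in> verts X" "w = f v"
    using w f(2) by (auto simp: bij_betw_def)
  ultimately show "r w = w"
    using fg rZ fX by metis
qed

lemma finite_selfmap_idempotent_power:
  assumes fin: "finite V" and hV: "\<forall>v\<in>V. h v \<in> V"
  shows "\<exists>k\<ge>1. \<forall>v\<in>V. (h ^^ k) ((h ^^ k) v) = (h ^^ k) v"
proof -
  have "(h ^^ n) v \<in> V" if "v \<in> V" for n v
    using that hV by (induction n) auto
  then have "range (\<lambda>n. restrict (h ^^ n) V) \<subseteq> V \<rightarrow>\<^sub>E V"
    by auto
  then have "finite (range (\<lambda>n. restrict (h ^^ n) V))"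
    using finite_PiE[OF fin, of "\<lambda>_. V"] fin finite_subset by blast
  then have "\<not> inj (\<lambda>n. restrict (h ^^ n) V)"
    using finite_imageD infinite_UNIV_nat by blast
  then obtain i j where "i \<noteq> j" "restrict (h ^^ i) V = restrict (h ^^ j) V"
    unfolding inj_def by blast
  then obtain i j where ij: "i < j" "restrict (h ^^ i) V = restrict (h ^^ j) V"
    by (metis linorder_neqE_nat)
  define p where "p = j - i"
  have split: "(h ^^ (a + b)) v = (h ^^ a) ((h ^^ b) v)" for a b v
    by (simp add: funpow_add)
  have period: "(h ^^ (m + q * p)) v = (h ^^ m) v" if "i \<le> m" "v \<in> V" for m q v
  proof (induction q)
    case (Suc q)
    have "m + Suc q * p = (m + q * p - i) + j" "m + q * p = (m + q * p - i) + i"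
      using ij(1) \<open>i \<le> m\<close> by (simp_all add: p_def)
    then have "(h ^^ (m + Suc q * p)) v = (h ^^ (m + q * p - i)) ((h ^^ j) v)"
      and "(h ^^ (m + q * p)) v = (h ^^ (m + q * p - i)) ((h ^^ i) v)"
      by (metis split)+
    moreover have "(h ^^ j) v = (h ^^ i) v"
      using ij(2) \<open>v \<in> V\<close> by (metis restrict_apply')
    ultimately show ?case
      using Suc.IH by simp
  qed simp
  define k where "k = Suc i * p"
  have "1 \<le> p"
    using ij(1) by (simp add: p_def)
  then have "Suc i \<le> k"
    using mult_le_mono2[of 1 p "Suc i"] by (simp add: k_def)
  then have "i \<le> k" "1 \<le> k"
    by simp_all
  moreover have "(h ^^ k) ((h ^^ k) v) = (h ^^ k) v" if "v \<in> V" for v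
  proof -
    have "(h ^^ k) ((h ^^ k) v) = (h ^^ (k + Suc i * p)) v"
      by (simp only: split flip: k_def)
    also have "\<dots> = (h ^^ k) v"
      using period[OF \<open>i \<le> k\<close> that] .
    finally show ?thesis .
  qed
  ultimately show ?thesis
    by blast
qed

lemma pruned_endomorph_inj_on:
  assumes "finite (verts X)" "pruned X" "morph X X h"
  shows "inj_on h (verts X)"
proof -
  have "\<forall>v\<in>verts X. h v \<in> verts X"
    using assms(3) by (simp add: morph_def)
  then obtain k where k: "k \<ge> 1" "\<forall>v\<in>verts X. (h ^^ k) ((h ^^ k) v) = (h ^^ k) v"
    using finite_selfmap_idempotent_power[OF assms(1)] by blast
  then have "retraction X (h ^^ k)"
    using morph_funpow[OF assms(3)] by (simp add: retraction_def)
  then have id: "(h ^^ k) v = v" if "v \<in> verts X" for v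
    using assms(2) that unfolding pruned_def by blast
  obtain k' where "k = Suc k'"
    using k(1) by (cases k) auto
  then have "(h ^^ k') (h v) = v" if "v \<in> verts X" for v
    using id[OF that] by (simp only: funpow_Suc_right comp_apply)
  then show ?thesis
    by (rule inj_on_inverseI)
qed

lemma edge_map_inj_on:
  assumes "wf_stree X" "inj_on f (verts X)"
  shows "inj_on (edge_map f) (edges X)"
proof (rule inj_onI)
  fix e1 e2
  assume in_E: "e1 \<in> edges X" "e2 \<in> edges X" and eq: "edge_map f e1 = edge_map f e2"
  obtain u1 a1 v1 u2 a2 v2 where e: "e1 = (u1, a1, v1)" "e2 = (u2, a2, v2)"
    by (metis prod_cases3)
  then have "u1 \<in> verts X" "v1 \<in> verts X" "u2 \<in> verts X" "v2 \<in> verts X"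
    using assms(1) in_E by (auto simp: wf_stree_def)
  moreover have "f u1 = f u2" "a1 = a2" "f v1 = f v2"
    using eq e by simp_all
  ultimately show "e1 = e2"
    using assms(2) e by (simp add: inj_on_eq_iff)
qed

lemma inj_on_into_smaller_imp_bij_betw:
  assumes "inj_on f A" "f ` A \<subseteq> B" "finite B" "card B \<le> card A"
  shows "bij_betw f A B"
proof -
  have "card (f ` A) = card A"
    using assms(1) by (rule card_image)
  then have "f ` A = B"
    using card_seteq[OF assms(3,2)] assms(4) by simp
  then show ?thesis
    using assms(1) by (simp add: bij_betw_def)
qed

lemma pruned_hom_equiv_imp_tree_iso:
  assumes X: "finite (verts X)" "finite (edges X)" "wf_stree X" "pruned X"
    and Y: "finite (verts Y)" "finite (edges Y)" "wf_stree Y" "pruned Y"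
    and "hom_equiv X Y"
  shows "tree_iso X Y"
proof -
  obtain f g where f: "morph X Y f" and g: "morph Y X g"
    using assms(9) by (auto simp: hom_equiv_def maps_to_def)
  have inj_f: "inj_on f (verts X)"
    using pruned_endomorph_inj_on[OF X(1,4) morph_comp[OF f g]] by (simp add: inj_on_def)
  have inj_g: "inj_on g (verts Y)"
    using pruned_endomorph_inj_on[OF Y(1,4) morph_comp[OF g f]] by (simp add: inj_on_def)
  have V: "f ` verts X \<subseteq> verts Y" "g ` verts Y \<subseteq> verts X"
    and E: "edge_map f ` edges X \<subseteq> edges Y" "edge_map g ` edges Y \<subseteq> edges X"
    using f g by (auto simp: morph_def)
  have "bij_betw f (verts X) (verts Y)"
    using inj_on_into_smaller_imp_bij_betw[OF inj_f V(1) Y(1)] card_inj_on_le[OF inj_g V(2) X(1)] .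
  moreover have "bij_betw (edge_map f) (edges X) (edges Y)"
    using inj_on_into_smaller_imp_bij_betw[OF edge_map_inj_on[OF X(3) inj_f] E(1) Y(2)]
      card_inj_on_le[OF edge_map_inj_on[OF Y(3) inj_g] E(2) X(2)] .
  ultimately show ?thesis
    unfolding tree_iso_def using f by blast
qed

section \<open>Gluing trees\<close>

text \<open>In a product the vertex 2 * v comes from the left factor and every odd vertex w from the
  vertex w div 2 of the right factor, so copair f g is the map induced by f on the left and g on
  the right factor.\<close>

definition copair :: "(nat \<Rightarrow> nat) \<Rightarrow> (nat \<Rightarrow> nat) \<Rightarrow> nat \<Rightarrow> nat" where
  "copair f g w = (if even w then f (w div 2) else g (w div 2))"

lemma copair_double [simp]: "copair f g (2 * v) = f v"
  by (simp add: copair_def)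

lemma copair_glue_map: "f (ev A) = g (sv B) \<Longrightarrow> copair f g (glue_map A B v) = g v"
  by (simp add: copair_def glue_map_def)

lemma glue_map_sv [simp]: "glue_map A B (sv B) = 2 * ev A"
  by (simp add: glue_map_def)

lemma tprod_simps [simp]:
  "verts (tprod X Y) = (\<lambda>v. 2 * v) ` verts X \<union> glue_map X Y ` verts Y"
  "edges (tprod X Y) = edge_map (\<lambda>v. 2 * v) ` edges X \<union> edge_map (glue_map X Y) ` edges Y"
  "sv (tprod X Y) = 2 * sv X"
  "ev (tprod X Y) = glue_map X Y (ev Y)"
  by (simp_all add: tprod_def)

lemma tplus_simps [simp]:
  "verts (tplus X) = verts X" "edges (tplus X) = edges X" "sv (tplus X) = sv X" "ev (tplus X) = sv X"
  by (simp_all add: tplus_def)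

lemma tstar_simps [simp]:
  "verts (tstar X) = verts X" "edges (tstar X) = edges X" "sv (tstar X) = ev X" "ev (tstar X) = ev X"
  by (simp_all add: tstar_def)

lemma wf_stree_tprod: "wf_stree X \<Longrightarrow> wf_stree Y \<Longrightarrow> wf_stree (tprod X Y)"
  unfolding wf_stree_def by auto

lemma wf_stree_tplus: "wf_stree X \<Longrightarrow> wf_stree (tplus X)"
  unfolding wf_stree_def by auto

lemma wf_stree_tstar: "wf_stree X \<Longrightarrow> wf_stree (tstar X)"
  unfolding wf_stree_def by auto

lemma hom_tprod_left: "hom X (tprod X Y) (\<lambda>v. 2 * v)"
  by (auto simp: hom_def)

lemma hom_tprod_right: "hom Y (tprod X Y) (glue_map X Y)"
  by (auto simp: hom_def)

lemma hom_copair: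
  assumes "hom A W f" "hom B W g" "f (ev A) = g (sv B)"
  shows "hom (tprod A B) W (copair f g)"
proof -
  have g: "copair f g (glue_map A B v) = g v" for v
    using assms(3) by (rule copair_glue_map)
  have "edge_map (copair f g) e \<in> edges W" if "e \<in> edges (tprod A B)" for e
    using that assms(1,2) g by (auto simp: hom_def)
  then show ?thesis
    using assms(1,2) g by (auto simp: hom_def)
qed

lemma morph_copair:
  assumes "hom A W f" "hom B W g" "f (ev A) = g (sv B)" "f (sv A) = sv W" "g (ev B) = ev W"
  shows "morph (tprod A B) W (copair f g)"
  using hom_copair[OF assms(1-3)] copair_glue_map[of f A g B, OF assms(3)] assms(4,5)
  by (simp add: morph_iff_hom)

lemma maps_to_tprod: "maps_to X X' \<Longrightarrow> maps_to Y Y' \<Longrightarrow> maps_to (tprod X Y) (tprod X' Y')"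
proof -
  assume "maps_to X X'" "maps_to Y Y'"
  then obtain f g where f: "morph X X' f" and g: "morph Y Y' g"
    by (auto simp: maps_to_def)
  have "hom X (tprod X' Y') (\<lambda>v. 2 * f v)" "hom Y (tprod X' Y') (\<lambda>v. glue_map X' Y' (g v))"
    using f g hom_comp[OF _ hom_tprod_left] hom_comp[OF _ hom_tprod_right] by (auto simp: morph_iff_hom)
  moreover have "2 * f (ev X) = glue_map X' Y' (g (sv Y))"
    using f g by (simp add: morph_def)
  ultimately have "morph (tprod X Y) (tprod X' Y') (copair (\<lambda>v. 2 * f v) (\<lambda>v. glue_map X' Y' (g v)))"
    using f g by (intro morph_copair) (auto simp: morph_def)
  then show ?thesis
    by (auto simp: maps_to_def)
qed

lemma hom_equiv_tprod: "hom_equiv X X' \<Longrightarrow> hom_equiv Y Y' \<Longrightarrow> hom_equiv (tprod X Y) (tprod X' Y')"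
  unfolding hom_equiv_def using maps_to_tprod by blast

lemma hom_tplus_iff [simp]: "hom (tplus X) Y f \<longleftrightarrow> hom X Y f"
  by (simp add: hom_def)

lemma hom_tstar_iff [simp]: "hom (tstar X) Y f \<longleftrightarrow> hom X Y f"
  by (simp add: hom_def)

lemma morph_tplus: "morph X Y f \<Longrightarrow> morph (tplus X) (tplus Y) f"
  by (simp add: morph_def)

lemma morph_tstar: "morph X Y f \<Longrightarrow> morph (tstar X) (tstar Y) f"
  by (simp add: morph_def)

lemma hom_equiv_tplus: "hom_equiv X Y \<Longrightarrow> hom_equiv (tplus X) (tplus Y)"
  unfolding hom_equiv_def maps_to_def using morph_tplus by blast

lemma hom_equiv_tstar: "hom_equiv X Y \<Longrightarrow> hom_equiv (tstar X) (tstar Y)"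
  unfolding hom_equiv_def maps_to_def using morph_tstar by blast

lemma hom_equiv_tprod_assoc: "hom_equiv (tprod (tprod X Y) Z) (tprod X (tprod Y Z))"
proof (rule hom_equiv_maps)
  let ?XY = "tprod X Y" and ?YZ = "tprod Y Z"
  let ?a = "\<lambda>v. 2 * v" and ?b = "\<lambda>v. glue_map X ?YZ (2 * v)"
    and ?c = "\<lambda>v. glue_map X ?YZ (glue_map Y Z v)"
  have ab: "?a (ev X) = ?b (sv Y)"
    by (simp add: glue_map_def)
  then have abc: "copair ?a ?b (ev ?XY) = ?c (sv Z)"
    using copair_glue_map[of ?a X ?b Y, OF ab] by simp
  have "hom ?XY (tprod X ?YZ) (copair ?a ?b)"
    using hom_tprod_left hom_comp[OF hom_tprod_left hom_tprod_right] ab by (rule hom_copair)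
  then show "morph (tprod ?XY Z) (tprod X ?YZ) (copair (copair ?a ?b) ?c)"
    using hom_comp[OF hom_tprod_right hom_tprod_right] abc by (rule morph_copair) simp_all
next
  let ?XY = "tprod X Y" and ?YZ = "tprod Y Z"
  let ?a = "\<lambda>v. 2 * (2 * v)" and ?b = "\<lambda>v. 2 * glue_map X Y v" and ?c = "glue_map ?XY Z"
  have bc: "?b (ev Y) = ?c (sv Z)"
    by simp
  then have abc: "?a (ev X) = copair ?b ?c (sv ?YZ)"
    by (simp add: glue_map_def)
  have "hom ?YZ (tprod ?XY Z) (copair ?b ?c)"
    using hom_comp[OF hom_tprod_right hom_tprod_left] hom_tprod_right bc by (rule hom_copair)
  with hom_comp[OF hom_tprod_left hom_tprod_left]
  show "morph (tprod X ?YZ) (tprod ?XY Z) (copair ?a (copair ?b ?c))"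
    using abc
    by (rule morph_copair) (simp_all add: copair_glue_map[of ?a X "copair ?b ?c" ?YZ, OF abc]
      copair_glue_map[of ?b Y ?c Z, OF bc])
qed

definition unit_stree :: "'a stree" where
  "unit_stree = \<lparr>verts = {0}, edges = {}, sv = 0, ev = 0\<rparr>"

lemma unit_stree_simps [simp]:
  "verts unit_stree = {0}" "edges unit_stree = {}" "sv unit_stree = 0" "ev unit_stree = 0"
  by (simp_all add: unit_stree_def)

lemma hom_unit_stree: "c \<in> verts A \<Longrightarrow> hom unit_stree A (\<lambda>_. c)"
  by (simp add: hom_def)

lemma hom_equiv_tprod_unit_left:
  assumes "wf_stree A"
  shows "hom_equiv (tprod unit_stree A) A"
proof (rule hom_equiv_maps)
  show "morph (tprod unit_stree A) A (copair (\<lambda>_. sv A) (\<lambda>v. v))"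
    using assms by (intro morph_copair hom_unit_stree hom_id) (simp_all add: wf_stree_def)
  show "morph A (tprod unit_stree A) (glue_map unit_stree A)"
    using hom_tprod_right by (simp add: morph_iff_hom)
qed

lemma hom_equiv_tprod_unit_right:
  assumes "wf_stree A"
  shows "hom_equiv (tprod A unit_stree) A"
proof (rule hom_equiv_maps)
  show "morph (tprod A unit_stree) A (copair (\<lambda>v. v) (\<lambda>_. ev A))"
    using assms by (intro morph_copair hom_unit_stree hom_id) (simp_all add: wf_stree_def)
  show "morph A (tprod A unit_stree) (\<lambda>v. 2 * v)"
    using hom_tprod_left by (simp add: morph_iff_hom glue_map_def)
qed

lemma hom_equiv_tplus_tprod: "hom_equiv (tprod (tplus A) A) A"
proof (rule hom_equiv_maps)
  show "morph (tprod (tplus A) A) A (copair (\<lambda>v. v) (\<lambda>v. v))"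
    by (intro morph_copair) (simp_all add: hom_id)
  show "morph A (tprod (tplus A) A) (glue_map (tplus A) A)"
    using hom_tprod_right by (simp add: morph_iff_hom)
qed

lemma hom_equiv_tprod_tstar: "hom_equiv (tprod A (tstar A)) A"
proof (rule hom_equiv_maps)
  show "morph (tprod A (tstar A)) A (copair (\<lambda>v. v) (\<lambda>v. v))"
    by (intro morph_copair) (simp_all add: hom_id)
  show "morph A (tprod A (tstar A)) (\<lambda>v. 2 * v)"
    using hom_tprod_left by (simp add: morph_iff_hom glue_map_def)
qed

lemma hom_equiv_tprod_self:
  assumes "sv Z = ev Z"
  shows "hom_equiv (tprod Z Z) Z"
proof (rule hom_equiv_maps)
  show "morph (tprod Z Z) Z (copair (\<lambda>v. v) (\<lambda>v. v))"
    using assms by (intro morph_copair) (simp_all add: hom_id)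
  show "morph Z (tprod Z Z) (\<lambda>v. 2 * v)"
    using assms hom_tprod_left by (simp add: morph_iff_hom glue_map_def)
qed

lemma hom_equiv_tprod_commute:
  assumes "sv X = ev X" "sv Y = ev Y"
  shows "hom_equiv (tprod X Y) (tprod Y X)"
proof -
  have "morph (tprod X Y) (tprod Y X) (copair (glue_map Y X) (\<lambda>v. 2 * v))"
    if "sv X = ev X" "sv Y = ev Y" for X Y :: "'a stree"
    by (intro morph_copair hom_tprod_left hom_tprod_right) (use that in \<open>simp_all add: glue_map_def\<close>)
  then show ?thesis
    using assms by (blast intro: hom_equiv_maps)
qed

section \<open>Gradings of trees\<close>

definition walk :: "(nat \<times> 'a \<times> nat) set \<Rightarrow> (nat \<Rightarrow> nat) \<Rightarrow> nat \<Rightarrow> bool" where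
  "walk E p n \<longleftrightarrow> (\<forall>i<n. \<exists>a. (p i, a, p (Suc i)) \<in> E)"

definition start_end_walk :: "'a stree \<Rightarrow> nat \<Rightarrow> bool" where
  "start_end_walk X n \<longleftrightarrow> (\<exists>p. p 0 = sv X \<and> p n = ev X \<and> walk (edges X) p n)"

definition grading :: "(nat \<times> 'a \<times> nat) set \<Rightarrow> (nat \<Rightarrow> int) \<Rightarrow> bool" where
  "grading E \<phi> \<longleftrightarrow> (\<forall>(u, a, v) \<in> E. \<phi> v = \<phi> u + 1)"

definition graded :: "'a stree \<Rightarrow> bool" where
  "graded X \<longleftrightarrow> wf_stree X \<and> (\<exists>n. start_end_walk X n) \<and> (\<exists>\<phi>. grading (edges X) \<phi>)"

definition adj :: "(nat \<times> 'a \<times> nat) set \<Rightarrow> (nat \<times> nat) set" where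
  "adj E = {(u, v). \<exists>a. (u, a, v) \<in> E \<or> (v, a, u) \<in> E}"

definition connected_on :: "nat set \<Rightarrow> (nat \<times> 'a \<times> nat) set \<Rightarrow> bool" where
  "connected_on V E \<longleftrightarrow> (\<forall>u\<in>V. \<forall>v\<in>V. (u, v) \<in> (adj E)\<^sup>*)"

definition degree :: "(nat \<times> 'a \<times> nat) set \<Rightarrow> nat \<Rightarrow> nat" where
  "degree E v = card {e\<in>E. fst e = v} + card {e\<in>E. snd (snd e) = v}"

definition leaf_edge :: "(nat \<times> 'a \<times> nat) set \<Rightarrow> nat \<Rightarrow> nat \<Rightarrow> nat \<times> 'a \<times> nat \<Rightarrow> bool" where
  "leaf_edge E l m e0 \<longleftrightarrow> l \<noteq> m \<and> e0 \<in> E \<and> (fst e0, snd (snd e0)) \<in> {(l, m), (m, l)} \<and>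
     (\<forall>e\<in>E. fst e = l \<or> snd (snd e) = l \<longrightarrow> e = e0)"

lemma walk_grading:
  assumes "walk E p n" "grading E \<phi>" "i \<le> n"
  shows "\<phi> (p i) = \<phi> (p 0) + int i"
  using assms(3)
proof (induction i)
  case (Suc i)
  then obtain a where "(p i, a, p (Suc i)) \<in> E"
    using assms(1) by (auto simp: walk_def Suc_le_eq)
  then show ?case
    using Suc assms(2) by (auto simp: grading_def)
qed simp

lemma start_end_walk_length:
  assumes "start_end_walk X n" "grading (edges X) \<phi>"
  shows "int n = \<phi> (ev X) - \<phi> (sv X)"
proof -
  obtain p where "p 0 = sv X" "p n = ev X" "walk (edges X) p n"
    using assms(1) by (auto simp: start_end_walk_def)
  then show ?thesis
    using walk_grading[of "edges X" p n \<phi> n] assms(2) by simp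
qed

lemma walk_hom: "walk (edges X) p n \<Longrightarrow> hom X Y f \<Longrightarrow> walk (edges Y) (\<lambda>i. f (p i)) n"
  unfolding walk_def hom_def by (metis edge_map_simp)

lemma rtrancl_dgraph_imp_walk:
  "(u, v) \<in> (dgraph X)\<^sup>* \<Longrightarrow> \<exists>n p. p 0 = u \<and> p n = v \<and> walk (edges X) p n"
proof (induction rule: rtrancl_induct)
  case base
  show ?case
    by (rule exI[of _ 0], rule exI[of _ "\<lambda>_. u"]) (simp add: walk_def)
next
  case (step v w)
  then obtain n p where p: "p 0 = u" "p n = v" "walk (edges X) p n"
    by blast
  obtain a where "(v, a, w) \<in> edges X"
    using step(2) by (auto simp: dgraph_def)
  then have "walk (edges X) (p(Suc n := w)) (Suc n)"
    using p(2,3) by (auto simp: walk_def less_Suc_eq)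
  then show ?case
    using p(1) by (metis fun_upd_same fun_upd_other nat.distinct(1))
qed

lemma start_end_walk_tprod:
  assumes "start_end_walk A nA" "start_end_walk X nX"
  shows "\<exists>q. q 0 = sv (tprod A X) \<and> q (nA + nX) = ev (tprod A X) \<and> q nA = 2 * ev A
             \<and> walk (edges (tprod A X)) q (nA + nX)"
proof -
  obtain pA where pA: "pA 0 = sv A" "pA nA = ev A" "walk (edges A) pA nA"
    using assms(1) by (auto simp: start_end_walk_def)
  obtain pX where pX: "pX 0 = sv X" "pX nX = ev X" "walk (edges X) pX nX"
    using assms(2) by (auto simp: start_end_walk_def)
  define q where "q i = (if i \<le> nA then 2 * pA i else glue_map A X (pX (i - nA)))" for i
  have q_right: "q i = glue_map A X (pX (i - nA))" if "nA \<le> i" for i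
    using that pA(2) pX(1) by (cases "i = nA") (auto simp: q_def)
  have "\<exists>a. (q i, a, q (Suc i)) \<in> edges (tprod A X)" if "i < nA + nX" for i
  proof (cases "i < nA")
    case True
    then obtain a where "(pA i, a, pA (Suc i)) \<in> edges A"
      using pA(3) by (auto simp: walk_def)
    then have "(2 * pA i, a, 2 * pA (Suc i)) \<in> edges (tprod A X)"
      by (force simp: image_iff)
    then show ?thesis
      using True by (auto simp: q_def)
  next
    case False
    then have "i - nA < nX"
      using that by simp
    then obtain a where "(pX (i - nA), a, pX (Suc (i - nA))) \<in> edges X"
      using pX(3) by (auto simp: walk_def)
    then have "(glue_map A X (pX (i - nA)), a, glue_map A X (pX (Suc (i - nA)))) \<in> edges (tprod A X)"
      by (force simp: image_iff)
    then have "(q i, a, q (Suc i)) \<in> edges (tprod A X)"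
      using False q_right[of i] q_right[of "Suc i"] by (simp add: Suc_diff_le)
    then show ?thesis
      by blast
  qed
  moreover have "q 0 = sv (tprod A X)" "q (nA + nX) = ev (tprod A X)" "q nA = 2 * ev A"
    using pA pX q_right[of "nA + nX"] by (simp_all add: q_def)
  ultimately show ?thesis
    unfolding walk_def by blast
qed

definition glue_grading ::
  "'a stree \<Rightarrow> 'a stree \<Rightarrow> (nat \<Rightarrow> int) \<Rightarrow> (nat \<Rightarrow> int) \<Rightarrow> nat \<Rightarrow> int" where
  "glue_grading B Y \<phi> \<psi> w =
     (if even w then \<phi> (w div 2) else \<phi> (ev B) + \<psi> (w div 2) - \<psi> (sv Y))"

lemma glue_grading_double [simp]: "glue_grading B Y \<phi> \<psi> (2 * v) = \<phi> v"
  by (simp add: glue_grading_def)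

lemma glue_grading_glue_map [simp]:
  "glue_grading B Y \<phi> \<psi> (glue_map B Y u) = \<phi> (ev B) + \<psi> u - \<psi> (sv Y)"
  by (simp add: glue_grading_def glue_map_def)

lemma grading_tprod:
  assumes "grading (edges B) \<phi>" "grading (edges Y) \<psi>"
  shows "grading (edges (tprod B Y)) (glue_grading B Y \<phi> \<psi>)"
  using assms unfolding grading_def by auto

lemma low_degree_vertex_exists:
  assumes "finite V" "finite E" "\<forall>(u, a, v)\<in>E. u \<in> V \<and> v \<in> V" "card E < card V"
  shows "\<exists>l\<in>V. degree E l < 2"
proof (rule ccontr)
  have fibres: "(\<Sum>v\<in>V. card {e\<in>E. h e = v}) = card E" if "h ` E \<subseteq> V" for h :: "_ \<Rightarrow> nat"
    using sum_fun_comp[of E V h "\<lambda>_. 1 :: nat"] assms(1,2) that by simp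
  assume "\<not> ?thesis"
  then have "(\<Sum>v\<in>V. 2) \<le> (\<Sum>v\<in>V. degree E v)"
    by (intro sum_mono) (simp add: not_less)
  also have "\<dots> = card E + card E"
  proof -
    have "fst ` E \<subseteq> V" "(\<lambda>e. snd (snd e)) ` E \<subseteq> V"
      using assms(3) by auto
    then show ?thesis
      unfolding degree_def sum.distrib using fibres[of fst] fibres[of "\<lambda>e. snd (snd e)"] by simp
  qed
  finally show False
    using assms(4) by simp
qed


lemma leaf_edge_exists:
  assumes fin: "finite V" "finite E" and ends: "\<forall>(u, a, v)\<in>E. u \<in> V \<and> v \<in> V"
    and card: "card E + 1 = card V" and conn: "connected_on V E" and "E \<noteq> {}"
  obtains l m e0 where "l \<in> V" "leaf_edge E l m e0"
proof -
  obtain l where l: "l \<in> V" "degree E l < 2"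
    using low_degree_vertex_exists[OF fin ends] card by auto
  have "card E \<noteq> 0"
    using fin(2) \<open>E \<noteq> {}\<close> by simp
  then have "card (V - {l}) \<noteq> 0"
    using card fin(1) l(1) by simp
  then have "V - {l} \<noteq> {}"
    by (metis card.empty)
  then obtain w where "w \<in> V" "w \<noteq> l"
    by blast
  then have "(l, w) \<in> (adj E)\<^sup>*"
    using conn l(1) by (auto simp: connected_on_def)
  then obtain x where "(l, x) \<in> adj E"
    using \<open>w \<noteq> l\<close> by (metis converse_rtranclE)
  then obtain e1 where e1: "e1 \<in> E" "fst e1 = l \<or> snd (snd e1) = l"
    by (force simp: adj_def)
  let ?I = "{e\<in>E. fst e = l \<or> snd (snd e) = l}"
  have "?I = {e\<in>E. fst e = l} \<union> {e\<in>E. snd (snd e) = l}"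
    by auto
  then have "card ?I \<le> 1"
    using l(2) card_Un_le[of "{e\<in>E. fst e = l}" "{e\<in>E. snd (snd e) = l}"]
    by (simp add: degree_def)
  moreover have "e1 \<in> ?I" "finite ?I"
    using e1 fin(2) by auto
  ultimately have "card ?I = 1"
    using card_gt_0_iff[of ?I] by fastforce
  then obtain e0 where I: "?I = {e0}"
    by (rule card_1_singletonE)
  then have e0: "e0 \<in> E" "fst e0 = l \<or> snd (snd e0) = l"
    by auto
  have "\<not> (fst e0 = l \<and> snd (snd e0) = l)"
  proof
    assume "fst e0 = l \<and> snd (snd e0) = l"
    then have "e0 \<in> {e\<in>E. fst e = l}" "e0 \<in> {e\<in>E. snd (snd e) = l}"
      using e0 by auto
    then have "{e\<in>E. fst e = l} \<noteq> {}" "{e\<in>E. snd (snd e) = l} \<noteq> {}"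
      by blast+
    then have "card {e\<in>E. fst e = l} \<noteq> 0" "card {e\<in>E. snd (snd e) = l} \<noteq> 0"
      using fin(2) by simp_all
    then show False
      using l(2) by (simp add: degree_def)
  qed
  moreover define m where "m = (if fst e0 = l then snd (snd e0) else fst e0)"
  ultimately have "l \<noteq> m" "(fst e0, snd (snd e0)) \<in> {(l, m), (m, l)}"
    using e0(2) by (auto simp: m_def)
  moreover have "e = e0" if "e \<in> E" "fst e = l \<or> snd (snd e) = l" for e
    using I that by blast
  ultimately show ?thesis
    using that l(1) e0(1) unfolding leaf_edge_def by blast
qed

lemma connected_on_remove_leaf:
  assumes conn: "connected_on V E" and "leaf_edge E l m e0"
  shows "connected_on (V - {l}) (E - {e0})"
proof -
  have "l \<noteq> m" and e0: "(fst e0, snd (snd e0)) \<in> {(l, m), (m, l)}"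
    and only: "\<And>e. e \<in> E \<Longrightarrow> fst e = l \<or> snd (snd e) = l \<Longrightarrow> e = e0"
    using assms(2) by (auto simp: leaf_edge_def)
  have via_leaf: "x = m \<and> y = l \<or> x = l \<and> y = m"
    if xy: "(x, y) \<in> adj E" and touch: "x = l \<or> y = l" for x y
  proof -
    obtain a where "(x, a, y) \<in> E \<or> (y, a, x) \<in> E"
      using xy by (auto simp: adj_def)
    then have "(x, a, y) = e0 \<or> (y, a, x) = e0"
      using only touch by force
    then show ?thesis
      using e0 \<open>l \<noteq> m\<close> by auto
  qed
  have off_leaf: "(x, y) \<in> adj (E - {e0})"
    if xy: "(x, y) \<in> adj E" and avoid: "x \<noteq> l" "y \<noteq> l" for x y
  proof -
    obtain a where "(x, a, y) \<in> E \<or> (y, a, x) \<in> E"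
      using xy by (auto simp: adj_def)
    moreover have "(x, a, y) \<noteq> e0" "(y, a, x) \<noteq> e0"
      using e0 avoid by auto
    ultimately show ?thesis
      by (auto simp: adj_def)
  qed
  \<comment> \<open>a path leaving u \<noteq> l can only reach l through m, so it can be cut off there\<close>
  have "(if v = l then (u, m) else (u, v)) \<in> (adj (E - {e0}))\<^sup>*"
    if "(u, v) \<in> (adj E)\<^sup>*" "u \<noteq> l" for u v
    using that
  proof (induction rule: rtrancl_induct)
    case (step v w)
    consider "w = l" | "v = l" | "v \<noteq> l" "w \<noteq> l"
      by blast
    then show ?case
    proof cases
      case 1
      then show ?thesis
        using via_leaf[OF step(2)] step.IH step.prems \<open>l \<noteq> m\<close> by auto
    next
      case 2
      then show ?thesis
        using via_leaf[OF step(2)] step.IH step.prems \<open>l \<noteq> m\<close> by auto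
    next
      case 3
      then show ?thesis
        using off_leaf[OF step(2)] step.IH step.prems by (auto intro: rtrancl_into_rtrancl)
    qed
  qed simp
  then show ?thesis
    using conn unfolding connected_on_def by (metis DiffE insertI1)
qed

lemma grading_extend_leaf:
  assumes "grading (E - {e0}) \<phi>" "leaf_edge E l m e0"
  shows "grading E (\<phi>(l := (if fst e0 = l then \<phi> m - 1 else \<phi> m + 1)))"
  unfolding grading_def
proof (intro ballI)
  fix e
  assume "e \<in> E"
  obtain u a v where e: "e = (u, a, v)"
    by (metis prod_cases3)
  show "case e of (u, a, v) \<Rightarrow> (\<phi>(l := (if fst e0 = l then \<phi> m - 1 else \<phi> m + 1))) v =
      (\<phi>(l := (if fst e0 = l then \<phi> m - 1 else \<phi> m + 1))) u + 1"
  proof (cases "e = e0")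
    case True
    then show ?thesis
      using e assms(2) by (auto simp: leaf_edge_def)
  next
    case False
    then have "(u, a, v) \<in> E - {e0}" "u \<noteq> l" "v \<noteq> l"
      using \<open>e \<in> E\<close> e assms(2) by (auto simp: leaf_edge_def)
    then show ?thesis
      using e assms(1) unfolding grading_def by fastforce
  qed
qed

lemma grading_exists:
  assumes "finite V" "finite E" "\<forall>(u, a, v)\<in>E. u \<in> V \<and> v \<in> V" "card E + 1 = card V"
    "connected_on V E"
  shows "\<exists>\<phi>. grading E \<phi>"
  using assms
proof (induction "card V" arbitrary: V E)
  case (Suc n)
  show ?case
  proof (cases "E = {}")
    case False
    then obtain l m e0 where leaf: "l \<in> V" "leaf_edge E l m e0"
      using leaf_edge_exists[OF Suc.prems] by blast
    have "e0 \<in> E"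
      using leaf(2) by (simp add: leaf_edge_def)
    have avoid: "u \<noteq> l \<and> v \<noteq> l" if "(u, a, v) \<in> E - {e0}" for u a v
      using leaf(2) that by (fastforce simp: leaf_edge_def)
    have "card E \<noteq> 0"
      using False Suc.prems(2) by simp
    have "\<exists>\<phi>. grading (E - {e0}) \<phi>"
    proof (rule Suc.hyps)
      show "n = card (V - {l})" "finite (V - {l})" "finite (E - {e0})"
        using Suc.hyps(2) Suc.prems(1,2) leaf(1) by simp_all
      show "card (E - {e0}) + 1 = card (V - {l})"
        using card_Diff_singleton[OF \<open>e0 \<in> E\<close>] card_Diff_singleton[OF leaf(1)] Suc.prems(4)
          \<open>card E \<noteq> 0\<close> by arith
      show "\<forall>(u, a, v)\<in>E - {e0}. u \<in> V - {l} \<and> v \<in> V - {l}"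
        using Suc.prems(3) avoid by fast
      show "connected_on (V - {l}) (E - {e0})"
        using Suc.prems(5) leaf(2) by (rule connected_on_remove_leaf)
    qed
    then show ?thesis
      using grading_extend_leaf[OF _ leaf(2)] by blast
  qed (auto simp: grading_def)
qed simp

lemma tree_graded: "is_tree \<Sigma> X \<Longrightarrow> graded X"
proof -
  assume tree: "is_tree \<Sigma> X"
  have "adj (edges X) = ugraph X"
    by (auto simp: adj_def ugraph_def dgraph_def)
  then have "\<exists>\<phi>. grading (edges X) \<phi>"
    using tree by (intro grading_exists) (auto simp: is_tree_def connected_on_def)
  moreover have "\<exists>n. start_end_walk X n"
    using tree rtrancl_dgraph_imp_walk by (auto simp: is_tree_def start_end_walk_def)
  ultimately show "graded X"
    using is_tree_imp_wf_stree[OF tree] by (simp add: graded_def)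
qed

section \<open>Cancellation at the glue point\<close>

text \<open>Only vertices of the left factor are even, and the only even vertex with an edge into the
  right factor is the glue point, so a walk across a product passes through the glue point.\<close>

lemma walk_tprod_meets_glue_point:
  assumes w: "walk (edges (tprod B Y)) r L" and "r 0 = 2 * sv B" "r L = glue_map B Y (ev Y)"
  shows "\<exists>i\<le>L. r i = 2 * ev B"
proof (rule ccontr)
  assume avoid: "\<not> (\<exists>i\<le>L. r i = 2 * ev B)"
  have evens: "even (r i)" if "i \<le> L" for i
    using that
  proof (induction i)
    case (Suc i)
    then have "even (r i)" "r i \<noteq> 2 * ev B" "i < L"
      using avoid by auto
    moreover obtain a where "(r i, a, r (Suc i)) \<in> edges (tprod B Y)"
      using w \<open>i < L\<close> unfolding walk_def by blast
    ultimately show ?case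
      by (auto simp: glue_map_def split: if_splits)
  qed (simp add: assms(2))
  have "r L = 2 * ev B"
    using evens[of L] assms(3) by (auto simp: glue_map_def split: if_splits)
  then show False
    using avoid by blast
qed

text \<open>Gradings measure walk lengths, so if the left factors (or the right factors) have the same
  height, a morphism of products must send the glue point to the glue point.\<close>

lemma morph_tprod_glue_point:
  assumes f: "morph (tprod A X) (tprod B Y) f"
    and walks: "start_end_walk A nA" "start_end_walk X nX"
    and gradings: "grading (edges B) \<phi>" "grading (edges Y) \<psi>"
    and height: "int nA = \<phi> (ev B) - \<phi> (sv B) \<or> int nX = \<psi> (ev Y) - \<psi> (sv Y)"
  shows "f (2 * ev A) = 2 * ev B"
proof -
  obtain q where q: "q 0 = sv (tprod A X)" "q (nA + nX) = ev (tprod A X)" "q nA = 2 * ev A"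
    "walk (edges (tprod A X)) q (nA + nX)"
    using start_end_walk_tprod[OF walks] by blast
  let ?r = "\<lambda>i. f (q i)" and ?L = "nA + nX" and ?\<chi> = "glue_grading B Y \<phi> \<psi>"
  have "hom (tprod A X) (tprod B Y) f"
    using f by (simp add: morph_iff_hom)
  then have "walk (edges (tprod B Y)) ?r ?L"
    by (rule walk_hom[OF q(4)])
  moreover have "?r 0 = 2 * sv B" "?r ?L = glue_map B Y (ev Y)"
    using f q(1,2) by (simp_all add: morph_def)
  ultimately have r: "walk (edges (tprod B Y)) ?r ?L" "?r 0 = 2 * sv B" "?r ?L = glue_map B Y (ev Y)"
    by blast+
  have \<chi>: "grading (edges (tprod B Y)) ?\<chi>"
    using grading_tprod[OF gradings] .
  have "?\<chi> (?r ?L) = ?\<chi> (?r 0) + int ?L"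
    using walk_grading[OF r(1) \<chi> le_refl] .
  then have L: "int ?L = (\<phi> (ev B) - \<phi> (sv B)) + (\<psi> (ev Y) - \<psi> (sv Y))"
    using r(2,3) by simp
  obtain i where i: "i \<le> ?L" "?r i = 2 * ev B"
    using walk_tprod_meets_glue_point[OF r] by blast
  have "?\<chi> (?r i) = ?\<chi> (?r 0) + int i"
    using walk_grading[OF r(1) \<chi> i(1)] .
  then have "int i = \<phi> (ev B) - \<phi> (sv B)"
    using i(2) r(2) by simp
  then have "i = nA"
    using height L by linarith
  then show ?thesis
    using i(2) q(3) by simp
qed

lemma maps_to_tprod_self_imp_sv_eq_ev:
  assumes "maps_to (tprod X X) X" "graded X"
  shows "sv X = ev X"
proof -
  obtain f where f: "morph (tprod X X) X f"
    using assms(1) by (auto simp: maps_to_def)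
  obtain n \<phi> where n: "start_end_walk X n" and \<phi>: "grading (edges X) \<phi>"
    using assms(2) by (auto simp: graded_def)
  obtain q where q: "q 0 = sv (tprod X X)" "q (n + n) = ev (tprod X X)"
    "walk (edges (tprod X X)) q (n + n)"
    using start_end_walk_tprod[OF n n] by blast
  have "hom (tprod X X) X f"
    using f by (simp add: morph_iff_hom)
  then have "\<phi> (f (q (n + n))) = \<phi> (f (q 0)) + int (n + n)"
    using walk_grading[OF walk_hom[OF q(3)] \<phi> le_refl] by blast
  then have "\<phi> (ev X) = \<phi> (sv X) + int (n + n)"
    using q(1,2) f by (simp add: morph_def)
  then have "n = 0"
    using start_end_walk_length[OF n \<phi>] by simp
  then show ?thesis
    using n by (auto simp: start_end_walk_def)
qed

lemma glue_map_update [simp]: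
  "glue_map X (A\<lparr>ev := w\<rparr>) = glue_map X A" "glue_map (X\<lparr>sv := w\<rparr>) P = glue_map X P"
  by (simp_all add: glue_map_def fun_eq_iff)

lemma tprod_tplus: "tprod X (tplus A) = (tprod X A)\<lparr>ev := 2 * ev X\<rparr>"
  by (simp add: tprod_def tplus_def glue_map_def)

lemma tstar_tprod: "tprod (tstar X) P = (tprod X P)\<lparr>sv := 2 * ev X\<rparr>"
  by (simp add: tprod_def tstar_def glue_map_def)

lemma maps_to_tprod_tplus_cancel:
  assumes "graded X" "graded Y" "graded A" "maps_to (tprod X A) (tprod Y A)"
  shows "maps_to (tprod X (tplus A)) (tprod Y (tplus A))"
proof -
  obtain f where f: "morph (tprod X A) (tprod Y A) f"
    using assms(4) by (auto simp: maps_to_def)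
  obtain nX where "start_end_walk X nX"
    using assms(1) by (auto simp: graded_def)
  moreover obtain nA \<phi> where "start_end_walk A nA" "grading (edges A) \<phi>"
    using assms(3) by (auto simp: graded_def)
  moreover obtain \<psi> where "grading (edges Y) \<psi>"
    using assms(2) by (auto simp: graded_def)
  ultimately have "f (2 * ev X) = 2 * ev Y"
    using morph_tprod_glue_point[OF f] start_end_walk_length by blast
  then have "morph (tprod X (tplus A)) (tprod Y (tplus A)) f"
    using f by (simp add: tprod_tplus morph_def)
  then show ?thesis
    by (auto simp: maps_to_def)
qed

lemma maps_to_tstar_tprod_cancel:
  assumes "graded X" "graded P" "graded Q" "maps_to (tprod X P) (tprod X Q)"
  shows "maps_to (tprod (tstar X) P) (tprod (tstar X) Q)"
proof -
  obtain f where f: "morph (tprod X P) (tprod X Q) f"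
    using assms(4) by (auto simp: maps_to_def)
  obtain nX \<phi> where "start_end_walk X nX" "grading (edges X) \<phi>"
    using assms(1) by (auto simp: graded_def)
  moreover obtain nP where "start_end_walk P nP"
    using assms(2) by (auto simp: graded_def)
  moreover obtain \<psi> where "grading (edges Q) \<psi>"
    using assms(3) by (auto simp: graded_def)
  ultimately have "f (2 * ev X) = 2 * ev X"
    using morph_tprod_glue_point[OF f] start_end_walk_length by blast
  then have "morph (tprod (tstar X) P) (tprod (tstar X) Q) f"
    using f by (simp add: tstar_tprod morph_def)
  then show ?thesis
    by (auto simp: maps_to_def)
qed

lemma hom_equiv_tprod_tplus_iff:
  assumes "graded X" "graded Y" "graded A"
  shows "hom_equiv (tprod X (tplus A)) (tprod Y (tplus A)) \<longleftrightarrow> hom_equiv (tprod X A) (tprod Y A)"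
proof
  have "hom_equiv (tprod Z A) (tprod (tprod Z (tplus A)) A)" for Z
    using hom_equiv_tprod[OF hom_equiv_refl hom_equiv_sym[OF hom_equiv_tplus_tprod]]
      hom_equiv_tprod_assoc hom_equiv_sym hom_equiv_trans by blast
  moreover assume "hom_equiv (tprod X (tplus A)) (tprod Y (tplus A))"
  ultimately show "hom_equiv (tprod X A) (tprod Y A)"
    using hom_equiv_tprod[OF _ hom_equiv_refl] hom_equiv_sym hom_equiv_trans by metis
next
  assume "hom_equiv (tprod X A) (tprod Y A)"
  then show "hom_equiv (tprod X (tplus A)) (tprod Y (tplus A))"
    using maps_to_tprod_tplus_cancel assms by (auto simp: hom_equiv_def)
qed

lemma hom_equiv_tstar_tprod_iff:
  assumes "graded A" "graded P" "graded Q"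
  shows "hom_equiv (tprod (tstar A) P) (tprod (tstar A) Q) \<longleftrightarrow> hom_equiv (tprod A P) (tprod A Q)"
proof
  have "hom_equiv (tprod A Z) (tprod A (tprod (tstar A) Z))" for Z
    using hom_equiv_tprod[OF hom_equiv_sym[OF hom_equiv_tprod_tstar] hom_equiv_refl]
      hom_equiv_tprod_assoc hom_equiv_trans by blast
  moreover assume "hom_equiv (tprod (tstar A) P) (tprod (tstar A) Q)"
  ultimately show "hom_equiv (tprod A P) (tprod A Q)"
    using hom_equiv_tprod[OF hom_equiv_refl] hom_equiv_sym hom_equiv_trans by metis
next
  assume "hom_equiv (tprod A P) (tprod A Q)"
  then show "hom_equiv (tprod (tstar A) P) (tprod (tstar A) Q)"
    using maps_to_tstar_tprod_cancel assms by (auto simp: hom_equiv_def)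
qed

lemma graded_tplus: "graded X \<Longrightarrow> graded (tplus X)"
  unfolding graded_def start_end_walk_def
  by (auto simp: wf_stree_tplus walk_def intro!: exI[of _ 0] exI[of _ "\<lambda>_. sv X"])

lemma graded_tstar: "graded X \<Longrightarrow> graded (tstar X)"
  unfolding graded_def start_end_walk_def
  by (auto simp: wf_stree_tstar walk_def intro!: exI[of _ 0] exI[of _ "\<lambda>_. ev X"])

section \<open>Classes of pruned trees and their representatives\<close>

definition represents :: "'a stree set \<Rightarrow> 'a stree \<Rightarrow> bool" where
  "represents c T \<longleftrightarrow> (\<forall>W\<in>c. hom_equiv W T)"

lemma hom_equiv_right_cong: "hom_equiv X Y \<Longrightarrow> hom_equiv Z X \<longleftrightarrow> hom_equiv Z Y"
  using hom_equiv_sym hom_equiv_trans by blast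

lemma T1_eq_hom_equiv_class:
  assumes "c \<in> T1 \<Sigma>" "X \<in> c"
  shows "c = {Z. is_tree \<Sigma> Z \<and> pruned Z \<and> hom_equiv Z X}"
proof -
  obtain X0 where X0: "c = iso_class \<Sigma> X0" "is_tree \<Sigma> X0" "pruned X0"
    using assms(1) by (auto simp: T1_def)
  have "iso_class \<Sigma> X0 = {Z. is_tree \<Sigma> Z \<and> pruned Z \<and> hom_equiv Z X0}"
  proof (intro set_eqI iffI)
    fix Z
    assume "Z \<in> iso_class \<Sigma> X0"
    then have Z: "is_tree \<Sigma> Z" "tree_iso X0 Z"
      by (simp_all add: iso_class_def)
    have "wf_stree X0"
      using X0(2) by (rule is_tree_imp_wf_stree)
    then have "hom_equiv Z X0" "pruned Z"
      using Z(2) X0(3) tree_iso_imp_hom_equiv hom_equiv_sym pruned_tree_iso by blast+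
    then show "Z \<in> {Z. is_tree \<Sigma> Z \<and> pruned Z \<and> hom_equiv Z X0}"
      using Z(1) by simp
  next
    fix Z
    assume "Z \<in> {Z. is_tree \<Sigma> Z \<and> pruned Z \<and> hom_equiv Z X0}"
    then have Z: "is_tree \<Sigma> Z" "pruned Z" "hom_equiv X0 Z"
      using hom_equiv_sym by auto
    have fin: "finite (verts T)" "finite (edges T)" "wf_stree T" if "is_tree \<Sigma> T" for T
      using that is_tree_imp_wf_stree by (auto simp: is_tree_def)
    have "tree_iso X0 Z"
      using pruned_hom_equiv_imp_tree_iso[OF fin[OF X0(2)] X0(3) fin[OF Z(1)] Z(2,3)] .
    then show "Z \<in> iso_class \<Sigma> X0"
      using Z(1) by (simp add: iso_class_def)
  qed
  moreover have "hom_equiv X X0"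
    using X0(1) assms(2) calculation by blast
  ultimately show ?thesis
    using X0(1) hom_equiv_right_cong[OF hom_equiv_sym[OF \<open>hom_equiv X X0\<close>]] by simp
qed

lemma T1_memberD: "c \<in> T1 \<Sigma> \<Longrightarrow> X \<in> c \<Longrightarrow> is_tree \<Sigma> X"
  using T1_eq_hom_equiv_class by blast

lemma T1_nonempty: "c \<in> T1 \<Sigma> \<Longrightarrow> \<exists>X. X \<in> c"
  by (auto simp: T1_def iso_class_def intro: tree_iso_refl)

lemma represents_member: "c \<in> T1 \<Sigma> \<Longrightarrow> X \<in> c \<Longrightarrow> represents c X"
  using T1_eq_hom_equiv_class unfolding represents_def by blast

lemma represents_hom_equiv: "represents c T \<Longrightarrow> hom_equiv T T' \<Longrightarrow> represents c T'"
  unfolding represents_def using hom_equiv_trans by blast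

lemma T1_eq_iff_hom_equiv:
  assumes "c \<in> T1 \<Sigma>" "d \<in> T1 \<Sigma>" "represents c T" "represents d T'"
  shows "c = d \<longleftrightarrow> hom_equiv T T'"
proof -
  obtain X Y where XY: "X \<in> c" "Y \<in> d"
    using T1_nonempty assms(1,2) by blast
  have c: "c = {Z. is_tree \<Sigma> Z \<and> pruned Z \<and> hom_equiv Z X}"
    and d: "d = {Z. is_tree \<Sigma> Z \<and> pruned Z \<and> hom_equiv Z Y}"
    using T1_eq_hom_equiv_class assms(1,2) XY by blast+
  have "c = d \<longleftrightarrow> hom_equiv Y X"
  proof
    assume "c = d"
    then show "hom_equiv Y X"
      using XY(2) c by blast
  next
    assume "hom_equiv Y X"
    then show "c = d"
      unfolding c d using hom_equiv_right_cong[OF \<open>hom_equiv Y X\<close>] by simp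
  qed
  also have "\<dots> \<longleftrightarrow> hom_equiv T T'"
    using XY assms(3,4) hom_equiv_right_cong hom_equiv_sym unfolding represents_def by metis
  finally show ?thesis .
qed

lemma pruned_retract_iso_hom_equiv:
  assumes "wf_stree X" "pruned_retract X R" "tree_iso R W"
  shows "hom_equiv W X"
proof -
  obtain r where r: "retraction X r" "R = retract_img X r"
    using assms(2) by (auto simp: pruned_retract_def)
  then have "morph X R r" "morph R X (\<lambda>v. v)"
    by (auto simp: retraction_def morph_def retract_img_def)
  moreover have "wf_stree R"
    using assms(1) r by (fastforce simp: wf_stree_def retract_img_def)
  ultimately have "hom_equiv W R" "hom_equiv R X"
    using tree_iso_imp_hom_equiv[OF _ assms(3)] hom_equiv_maps hom_equiv_sym by blast+
  then show ?thesis
    by (rule hom_equiv_trans)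
qed

lemma represents_pmult:
  assumes "c \<in> T1 \<Sigma>" "d \<in> T1 \<Sigma>" "represents c A" "represents d B"
  shows "represents (pmult \<Sigma> c d) (tprod A B)"
  unfolding represents_def
proof
  fix W
  assume "W \<in> pmult \<Sigma> c d"
  then obtain X Y R where XY: "X \<in> c" "Y \<in> d" and "pruned_retract (tprod X Y) R" "tree_iso R W"
    by (auto simp: pmult_def)
  moreover have "wf_stree (tprod X Y)"
    using XY assms(1,2) T1_memberD is_tree_imp_wf_stree wf_stree_tprod by blast
  ultimately have "hom_equiv W (tprod X Y)"
    using pruned_retract_iso_hom_equiv by blast
  then show "hom_equiv W (tprod A B)"
    using XY assms(3,4) hom_equiv_tprod hom_equiv_trans unfolding represents_def by blast
qed

lemma represents_pplus:
  assumes "c \<in> T1 \<Sigma>" "represents c A"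
  shows "represents (pplus \<Sigma> c) (tplus A)"
  unfolding represents_def
proof
  fix W
  assume "W \<in> pplus \<Sigma> c"
  then obtain X R where X: "X \<in> c" and "pruned_retract (tplus X) R" "tree_iso R W"
    by (auto simp: pplus_def)
  moreover have "wf_stree (tplus X)"
    using X assms(1) T1_memberD is_tree_imp_wf_stree wf_stree_tplus by blast
  ultimately have "hom_equiv W (tplus X)"
    using pruned_retract_iso_hom_equiv by blast
  then show "hom_equiv W (tplus A)"
    using X assms(2) hom_equiv_tplus hom_equiv_trans unfolding represents_def by blast
qed

lemma represents_pstar:
  assumes "c \<in> T1 \<Sigma>" "represents c A"
  shows "represents (pstar \<Sigma> c) (tstar A)"
  unfolding represents_def
proof
  fix W
  assume "W \<in> pstar \<Sigma> c"
  then obtain X R where X: "X \<in> c" and "pruned_retract (tstar X) R" "tree_iso R W"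
    by (auto simp: pstar_def)
  moreover have "wf_stree (tstar X)"
    using X assms(1) T1_memberD is_tree_imp_wf_stree wf_stree_tstar by blast
  ultimately have "hom_equiv W (tstar X)"
    using pruned_retract_iso_hom_equiv by blast
  then show "hom_equiv W (tstar A)"
    using X assms(2) hom_equiv_tstar hom_equiv_trans unfolding represents_def by blast
qed

lemma T1_graded_representative:
  assumes "c \<in> T1 \<Sigma>"
  obtains A where "A \<in> c" "graded A" "represents c A"
  using T1_nonempty[OF assms] T1_memberD[OF assms] tree_graded represents_member[OF assms] by blast

section \<open>The adequate semigroups\<close>

lemma graded_unit_stree: "graded unit_stree"
  by (auto simp: graded_def wf_stree_def start_end_walk_def walk_def grading_def)

lemma lmul1_closed: "closed2 S m \<Longrightarrow> x \<in> S1 S \<Longrightarrow> a \<in> S \<Longrightarrow> lmul1 m x a \<in> S"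
  by (auto simp: closed2_def S1_def lmul1_def)

lemma rmul1_closed: "closed2 S m \<Longrightarrow> x \<in> S1 S \<Longrightarrow> a \<in> S \<Longrightarrow> rmul1 m a x \<in> S"
  by (auto simp: closed2_def S1_def rmul1_def)

lemma represents_lmul1:
  assumes "S \<subseteq> T1 \<Sigma>" "x \<in> S1 S"
  obtains X where "graded X"
    "\<And>a A. a \<in> T1 \<Sigma> \<Longrightarrow> represents a A \<Longrightarrow> wf_stree A \<Longrightarrow>
      represents (lmul1 (pmult \<Sigma>) x a) (tprod X A)"
proof (cases x)
  case None
  show ?thesis
  proof (rule that[OF graded_unit_stree])
    fix a :: "'a stree set" and A
    assume "represents a A" "wf_stree A"
    then have "represents a (tprod unit_stree A)"
      using represents_hom_equiv hom_equiv_sym[OF hom_equiv_tprod_unit_left] by blast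
    then show "represents (lmul1 (pmult \<Sigma>) x a) (tprod unit_stree A)"
      using None by (simp add: lmul1_def)
  qed
next
  case (Some c)
  then have "c \<in> T1 \<Sigma>"
    using assms by (auto simp: S1_def)
  then obtain C where "graded C" "represents c C"
    by (rule T1_graded_representative)
  show ?thesis
  proof (rule that[OF \<open>graded C\<close>])
    fix a :: "'a stree set" and A
    assume "a \<in> T1 \<Sigma>" "represents a A"
    then show "represents (lmul1 (pmult \<Sigma>) x a) (tprod C A)"
      using represents_pmult[OF \<open>c \<in> T1 \<Sigma>\<close>] \<open>represents c C\<close> Some by (simp add: lmul1_def)
  qed
qed

lemma represents_rmul1:
  assumes "S \<subseteq> T1 \<Sigma>" "x \<in> S1 S"
  obtains X where "graded X"
    "\<And>a A. a \<in> T1 \<Sigma> \<Longrightarrow> represents a A \<Longrightarrow> wf_stree A \<Longrightarrow>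
      represents (rmul1 (pmult \<Sigma>) a x) (tprod A X)"
proof (cases x)
  case None
  show ?thesis
  proof (rule that[OF graded_unit_stree])
    fix a :: "'a stree set" and A
    assume "represents a A" "wf_stree A"
    then have "represents a (tprod A unit_stree)"
      using represents_hom_equiv hom_equiv_sym[OF hom_equiv_tprod_unit_right] by blast
    then show "represents (rmul1 (pmult \<Sigma>) a x) (tprod A unit_stree)"
      using None by (simp add: rmul1_def)
  qed
next
  case (Some c)
  then have "c \<in> T1 \<Sigma>"
    using assms by (auto simp: S1_def)
  then obtain C where "graded C" "represents c C"
    by (rule T1_graded_representative)
  show ?thesis
  proof (rule that[OF \<open>graded C\<close>])
    fix a :: "'a stree set" and A
    assume "a \<in> T1 \<Sigma>" "represents a A"
    then show "represents (rmul1 (pmult \<Sigma>) a x) (tprod A C)"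
      using represents_pmult[OF _ \<open>c \<in> T1 \<Sigma>\<close>] \<open>represents c C\<close> Some by (simp add: rmul1_def)
  qed
qed

lemma Rstar_pmult_if_cancel:
  assumes S: "S \<subseteq> T1 \<Sigma>" "closed2 S (pmult \<Sigma>)" and "e \<in> S" "a \<in> S"
    and reps: "represents e E" "represents a A" "wf_stree E" "wf_stree A"
    and cancel: "\<And>X Y. graded X \<Longrightarrow> graded Y \<Longrightarrow>
      hom_equiv (tprod X E) (tprod Y E) \<longleftrightarrow> hom_equiv (tprod X A) (tprod Y A)"
  shows "Rstar S (pmult \<Sigma>) e a"
  unfolding Rstar_def
proof (intro ballI)
  fix x y
  assume "x \<in> S1 S" "y \<in> S1 S"
  obtain X where X: "graded X" "\<And>b B. b \<in> T1 \<Sigma> \<Longrightarrow> represents b B \<Longrightarrow> wf_stree B \<Longrightarrow>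
      represents (lmul1 (pmult \<Sigma>) x b) (tprod X B)"
    using represents_lmul1[OF S(1) \<open>x \<in> S1 S\<close>] by blast
  obtain Y where Y: "graded Y" "\<And>b B. b \<in> T1 \<Sigma> \<Longrightarrow> represents b B \<Longrightarrow> wf_stree B \<Longrightarrow>
      represents (lmul1 (pmult \<Sigma>) y b) (tprod Y B)"
    using represents_lmul1[OF S(1) \<open>y \<in> S1 S\<close>] by blast
  have T1: "e \<in> T1 \<Sigma>" "a \<in> T1 \<Sigma>"
    using S(1) \<open>e \<in> S\<close> \<open>a \<in> S\<close> by auto
  have prod_T1: "lmul1 (pmult \<Sigma>) z b \<in> T1 \<Sigma>" if "z \<in> S1 S" "b \<in> S" for z b
    using lmul1_closed[OF S(2) that] S(1) by auto
  have "lmul1 (pmult \<Sigma>) x e = lmul1 (pmult \<Sigma>) y e \<longleftrightarrow> hom_equiv (tprod X E) (tprod Y E)"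
    using prod_T1 \<open>x \<in> S1 S\<close> \<open>y \<in> S1 S\<close> \<open>e \<in> S\<close> X(2)[OF T1(1) reps(1,3)] Y(2)[OF T1(1) reps(1,3)]
    by (intro T1_eq_iff_hom_equiv)
  moreover have "lmul1 (pmult \<Sigma>) x a = lmul1 (pmult \<Sigma>) y a \<longleftrightarrow> hom_equiv (tprod X A) (tprod Y A)"
    using prod_T1 \<open>x \<in> S1 S\<close> \<open>y \<in> S1 S\<close> \<open>a \<in> S\<close> X(2)[OF T1(2) reps(2,4)] Y(2)[OF T1(2) reps(2,4)]
    by (intro T1_eq_iff_hom_equiv)
  ultimately show "lmul1 (pmult \<Sigma>) x e = lmul1 (pmult \<Sigma>) y e \<longleftrightarrow>
      lmul1 (pmult \<Sigma>) x a = lmul1 (pmult \<Sigma>) y a"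
    using cancel[OF X(1) Y(1)] by simp
qed

lemma Lstar_pmult_if_cancel:
  assumes S: "S \<subseteq> T1 \<Sigma>" "closed2 S (pmult \<Sigma>)" and "e \<in> S" "a \<in> S"
    and reps: "represents e E" "represents a A" "wf_stree E" "wf_stree A"
    and cancel: "\<And>X Y. graded X \<Longrightarrow> graded Y \<Longrightarrow>
      hom_equiv (tprod E X) (tprod E Y) \<longleftrightarrow> hom_equiv (tprod A X) (tprod A Y)"
  shows "Lstar S (pmult \<Sigma>) e a"
  unfolding Lstar_def
proof (intro ballI)
  fix x y
  assume "x \<in> S1 S" "y \<in> S1 S"
  obtain X where X: "graded X" "\<And>b B. b \<in> T1 \<Sigma> \<Longrightarrow> represents b B \<Longrightarrow> wf_stree B \<Longrightarrow>
      represents (rmul1 (pmult \<Sigma>) b x) (tprod B X)"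
    using represents_rmul1[OF S(1) \<open>x \<in> S1 S\<close>] by blast
  obtain Y where Y: "graded Y" "\<And>b B. b \<in> T1 \<Sigma> \<Longrightarrow> represents b B \<Longrightarrow> wf_stree B \<Longrightarrow>
      represents (rmul1 (pmult \<Sigma>) b y) (tprod B Y)"
    using represents_rmul1[OF S(1) \<open>y \<in> S1 S\<close>] by blast
  have T1: "e \<in> T1 \<Sigma>" "a \<in> T1 \<Sigma>"
    using S(1) \<open>e \<in> S\<close> \<open>a \<in> S\<close> by auto
  have prod_T1: "rmul1 (pmult \<Sigma>) b z \<in> T1 \<Sigma>" if "z \<in> S1 S" "b \<in> S" for z b
    using rmul1_closed[OF S(2) that] S(1) by auto
  have "rmul1 (pmult \<Sigma>) e x = rmul1 (pmult \<Sigma>) e y \<longleftrightarrow> hom_equiv (tprod E X) (tprod E Y)"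
    using prod_T1 \<open>x \<in> S1 S\<close> \<open>y \<in> S1 S\<close> \<open>e \<in> S\<close> X(2)[OF T1(1) reps(1,3)] Y(2)[OF T1(1) reps(1,3)]
    by (intro T1_eq_iff_hom_equiv)
  moreover have "rmul1 (pmult \<Sigma>) a x = rmul1 (pmult \<Sigma>) a y \<longleftrightarrow> hom_equiv (tprod A X) (tprod A Y)"
    using prod_T1 \<open>x \<in> S1 S\<close> \<open>y \<in> S1 S\<close> \<open>a \<in> S\<close> X(2)[OF T1(2) reps(2,4)] Y(2)[OF T1(2) reps(2,4)]
    by (intro T1_eq_iff_hom_equiv)
  ultimately show "rmul1 (pmult \<Sigma>) e x = rmul1 (pmult \<Sigma>) e y \<longleftrightarrow>
      rmul1 (pmult \<Sigma>) a x = rmul1 (pmult \<Sigma>) a y"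
    using cancel[OF X(1) Y(1)] by simp
qed

lemma semigroup_on_pmult:
  assumes S: "S \<subseteq> T1 \<Sigma>" "closed2 S (pmult \<Sigma>)"
  shows "semigroup_on S (pmult \<Sigma>)"
  unfolding semigroup_on_def
proof (intro conjI ballI)
  fix a b
  assume "a \<in> S" "b \<in> S"
  then show "pmult \<Sigma> a b \<in> S"
    using S(2) by (simp add: closed2_def)
next
  fix a b c
  assume abc: "a \<in> S" "b \<in> S" "c \<in> S"
  then have T1: "a \<in> T1 \<Sigma>" "b \<in> T1 \<Sigma>" "c \<in> T1 \<Sigma>"
    "pmult \<Sigma> a b \<in> T1 \<Sigma>" "pmult \<Sigma> b c \<in> T1 \<Sigma>"
    "pmult \<Sigma> (pmult \<Sigma> a b) c \<in> T1 \<Sigma>" "pmult \<Sigma> a (pmult \<Sigma> b c) \<in> T1 \<Sigma>"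
    using S by (auto simp: closed2_def)
  obtain A B C where "represents a A" "represents b B" "represents c C"
    using T1_graded_representative T1(1-3) by metis
  then have "represents (pmult \<Sigma> (pmult \<Sigma> a b) c) (tprod (tprod A B) C)"
    "represents (pmult \<Sigma> a (pmult \<Sigma> b c)) (tprod A (tprod B C))"
    using represents_pmult T1 by metis+
  then show "pmult \<Sigma> (pmult \<Sigma> a b) c = pmult \<Sigma> a (pmult \<Sigma> b c)"
    using T1_eq_iff_hom_equiv[OF T1(6,7)] hom_equiv_tprod_assoc by blast
qed

lemma idempotent_sv_eq_ev:
  assumes "e \<in> T1 \<Sigma>" "pmult \<Sigma> e e = e" "E \<in> e"
  shows "sv E = ev E"
proof -
  have "represents e E"
    using assms(1,3) by (rule represents_member)
  moreover from this have "represents e (tprod E E)"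
    using represents_pmult[OF assms(1,1)] assms(2) by metis
  ultimately have "hom_equiv (tprod E E) E"
    using T1_eq_iff_hom_equiv[OF assms(1,1)] by blast
  moreover have "graded E"
    using T1_memberD[OF assms(1,3)] by (rule tree_graded)
  ultimately show ?thesis
    using maps_to_tprod_self_imp_sv_eq_ev by (auto simp: hom_equiv_def)
qed

lemma idem_commute_pmult:
  assumes S: "S \<subseteq> T1 \<Sigma>" "closed2 S (pmult \<Sigma>)"
  shows "idem_commute S (pmult \<Sigma>)"
  unfolding idem_commute_def
proof (intro ballI impI)
  fix e f
  assume ef: "e \<in> S" "f \<in> S" and idem: "pmult \<Sigma> e e = e \<and> pmult \<Sigma> f f = f"
  then have T1: "e \<in> T1 \<Sigma>" "f \<in> T1 \<Sigma>" "pmult \<Sigma> e f \<in> T1 \<Sigma>" "pmult \<Sigma> f e \<in> T1 \<Sigma>"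
    using S by (auto simp: closed2_def)
  obtain E F where EF: "E \<in> e" "F \<in> f"
    using T1_nonempty T1(1,2) by metis
  then have "sv E = ev E" "sv F = ev F"
    using idempotent_sv_eq_ev T1(1,2) idem by blast+
  moreover have "represents (pmult \<Sigma> e f) (tprod E F)" "represents (pmult \<Sigma> f e) (tprod F E)"
    using represents_pmult represents_member T1 EF by metis+
  ultimately show "pmult \<Sigma> e f = pmult \<Sigma> f e"
    using T1_eq_iff_hom_equiv[OF T1(3,4)] hom_equiv_tprod_commute by blast
qed

lemma is_plus_op_pplus:
  assumes S: "S \<subseteq> T1 \<Sigma>" "closed2 S (pmult \<Sigma>)" and "closed1 S (pplus \<Sigma>)"
  shows "is_plus_op S (pmult \<Sigma>) (pplus \<Sigma>)"
  unfolding is_plus_op_def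
proof (intro ballI conjI)
  fix a
  assume "a \<in> S"
  then show p: "pplus \<Sigma> a \<in> S"
    using assms(3) by (simp add: closed1_def)
  have T1: "a \<in> T1 \<Sigma>" "pplus \<Sigma> a \<in> T1 \<Sigma>" "pmult \<Sigma> (pplus \<Sigma> a) (pplus \<Sigma> a) \<in> T1 \<Sigma>"
    using S \<open>a \<in> S\<close> p by (auto simp: closed2_def)
  obtain A where A: "graded A" "represents a A"
    using T1_graded_representative[OF T1(1)] by metis
  then have P: "represents (pplus \<Sigma> a) (tplus A)" "graded (tplus A)"
    using represents_pplus[OF T1(1)] graded_tplus by blast+
  then have "represents (pmult \<Sigma> (pplus \<Sigma> a) (pplus \<Sigma> a)) (tprod (tplus A) (tplus A))"
    using represents_pmult T1(2) by blast
  then show "pmult \<Sigma> (pplus \<Sigma> a) (pplus \<Sigma> a) = pplus \<Sigma> a"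
    using T1_eq_iff_hom_equiv[OF T1(3,2) _ P(1)] hom_equiv_tprod_self[of "tplus A"] by simp
  have "wf_stree A"
    using A(1) by (simp add: graded_def)
  then show "Rstar S (pmult \<Sigma>) (pplus \<Sigma> a) a"
    using Rstar_pmult_if_cancel[OF S p \<open>a \<in> S\<close> P(1) A(2) wf_stree_tplus]
      hom_equiv_tprod_tplus_iff[OF _ _ A(1)] by blast
qed

lemma is_star_op_pstar:
  assumes S: "S \<subseteq> T1 \<Sigma>" "closed2 S (pmult \<Sigma>)" and "closed1 S (pstar \<Sigma>)"
  shows "is_star_op S (pmult \<Sigma>) (pstar \<Sigma>)"
  unfolding is_star_op_def
proof (intro ballI conjI)
  fix a
  assume "a \<in> S"
  then show p: "pstar \<Sigma> a \<in> S"
    using assms(3) by (simp add: closed1_def)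
  have T1: "a \<in> T1 \<Sigma>" "pstar \<Sigma> a \<in> T1 \<Sigma>" "pmult \<Sigma> (pstar \<Sigma> a) (pstar \<Sigma> a) \<in> T1 \<Sigma>"
    using S \<open>a \<in> S\<close> p by (auto simp: closed2_def)
  obtain A where A: "graded A" "represents a A"
    using T1_graded_representative[OF T1(1)] by metis
  then have P: "represents (pstar \<Sigma> a) (tstar A)" "graded (tstar A)"
    using represents_pstar[OF T1(1)] graded_tstar by blast+
  then have "represents (pmult \<Sigma> (pstar \<Sigma> a) (pstar \<Sigma> a)) (tprod (tstar A) (tstar A))"
    using represents_pmult T1(2) by blast
  then show "pmult \<Sigma> (pstar \<Sigma> a) (pstar \<Sigma> a) = pstar \<Sigma> a"
    using T1_eq_iff_hom_equiv[OF T1(3,2) _ P(1)] hom_equiv_tprod_self[of "tstar A"] by simp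
  have "wf_stree A"
    using A(1) by (simp add: graded_def)
  then show "Lstar S (pmult \<Sigma>) (pstar \<Sigma> a) a"
    using Lstar_pmult_if_cancel[OF S p \<open>a \<in> S\<close> P(1) A(2) wf_stree_tstar]
      hom_equiv_tstar_tprod_iff[OF A(1)] by blast
qed

lemma left_adequate_pmult:
  assumes "S \<subseteq> T1 \<Sigma>" "closed2 S (pmult \<Sigma>)" "closed1 S (pplus \<Sigma>)"
  shows "left_adequate S (pmult \<Sigma>)"
  using is_plus_op_pplus[OF assms] semigroup_on_pmult[OF assms(1,2)] idem_commute_pmult[OF assms(1,2)]
  unfolding left_adequate_def is_plus_op_def by blast

lemma right_adequate_pmult:
  assumes "S \<subseteq> T1 \<Sigma>" "closed2 S (pmult \<Sigma>)" "closed1 S (pstar \<Sigma>)"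
  shows "right_adequate S (pmult \<Sigma>)"
  using is_star_op_pstar[OF assms] semigroup_on_pmult[OF assms(1,2)] idem_commute_pmult[OF assms(1,2)]
  unfolding right_adequate_def is_star_op_def by blast

theorem theorem4p10:
  fixes \<Sigma> :: "'a set"
  shows "(\<forall>S. S \<subseteq> T1 \<Sigma> \<and> closed2 S (pmult \<Sigma>) \<and> closed1 S (pplus \<Sigma>) \<and> closed1 S (pstar \<Sigma>)
            \<longrightarrow> adequate S (pmult \<Sigma>) \<and> is_plus_op S (pmult \<Sigma>) (pplus \<Sigma>)
                \<and> is_star_op S (pmult \<Sigma>) (pstar \<Sigma>)) \<and>
         (\<forall>S. S \<subseteq> T1 \<Sigma> \<and> closed2 S (pmult \<Sigma>) \<and> closed1 S (pplus \<Sigma>)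
            \<longrightarrow> left_adequate S (pmult \<Sigma>) \<and> is_plus_op S (pmult \<Sigma>) (pplus \<Sigma>)) \<and>
         (\<forall>S. S \<subseteq> T1 \<Sigma> \<and> closed2 S (pmult \<Sigma>) \<and> closed1 S (pstar \<Sigma>)
            \<longrightarrow> right_adequate S (pmult \<Sigma>) \<and> is_star_op S (pmult \<Sigma>) (pstar \<Sigma>))"
  using left_adequate_pmult right_adequate_pmult is_plus_op_pplus is_star_op_pstar
  by (auto simp: adequate_def)

end
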